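(* Let $\Gamma$ be a connected, undirected graph without loops on $n$ nodes with Laplacian $\mathbf L=\mathbf K-\mathbf A$, and let $\phi_1,\dots,\phi_n$ be an orthonormal basis of $\mathbb R^n$ of eigenvectors of $\mathbf L$ with $\mathbf L\phi_i=\mu_i\phi_i$, and assume $\mu_i\neq 2$ for all $i$. For each $i$ let $\xi_i$ be a (complex) square root of $\mu_i^2-4$, $\lambda_i^+=\tfrac12(\xi_i-\mu_i)$, $\lambda_i^-=-\tfrac12(\xi_i+\mu_i)$. Let $$\mathbf G=\begin{bmatrix}\mathbf 0&\mathbf I\\-\mathbf I&-\mathbf L\end{bmatrix},$$ fix a node $h$, $F_0\in\mathbb R$ and $\omega>0$ with $\omega\neq1$, and let $\mathbf y(t)=(\mathbf x(t),\mathbf v(t))$ solve $\dot{\mathbf y}=\mathbf G\mathbf y+\mathbf b(t)$, $\mathbf y(0)=\mathbf 0$, with $\mathbf b(t)=F_0\sin(\omega t)(\mathbf 0,\mathbf e_h)^T$. Then $$\mathbf x(t)=\sum_{i=1}^n\frac{F_0\phi_i(h)}{\xi_i}\Bigg[\Big(\frac{1-(\lambda_i^-)^2}{\xi_i(\omega^2+(\lambda_i^-)^2)}+\frac{1-(\lambda_i^+)^2}{\xi_i(\omega^2+(\lambda_i^+)^2)}\Big)\sin\omega t+\Big(\frac{1}{\omega^2+(\lambda_i^-)^2}-\frac{1}{\omega^2+(\lambda_i^+)^2}\Big)\omega\cos\omega t+\frac{\omega\, e^{\lambda_i^+t}}{\omega^2+(\lambda_i^+)^2}-\frac{\omega\,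 e^{\lambda_i^-t}}{\omega^2+(\lambda_i^-)^2}\Bigg]\phi_i$$ and $$\mathbf v(t)=\sum_{i=1}^n\frac{F_0\phi_i(h)}{\xi_i}\Bigg[\Big(\frac{\lambda_i^-(1-(\lambda_i^-)^2)}{\xi_i(\omega^2+(\lambda_i^-)^2)}+\frac{\lambda_i^+(1-(\lambda_i^+)^2)}{\xi_i(\omega^2+(\lambda_i^+)^2)}\Big)\sin\omega t+\Big(\frac{\lambda_i^-}{\omega^2+(\lambda_i^-)^2}-\frac{\lambda_i^+}{\omega^2+(\lambda_i^+)^2}\Big)\omega\cos\omega t+\frac{\omega\lambda_i^+ e^{\lambda_i^+t}}{\omega^2+(\lambda_i^+)^2}-\frac{\omega\lambda_i^- e^{\lambda_i^-t}}{\omega^2+(\lambda_i^-)^2}\Bigg]\phi_i.$$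
   Context: $\mathbf A$ is the adjacency matrix, $\mathbf K$ the diagonal degree matrix, $\mathbf I,\mathbf 0$ the $n\times n$ identity and zero matrices, $\mathbf e_h$ the $h$-th standard basis vector, $\phi_i(h)$ the $h$-th component of $\phi_i$. The equation is $\ddot{\mathbf x}+\mathbf L\dot{\mathbf x}+\mathbf x=F_0\sin(\omega t)\mathbf e_h$. $\lambda_i^\pm$ are the two roots of $\lambda^2+\mu_i\lambda+1=0$. *)

theory Defs
  imports "HOL-Analysis.Analysis"
begin

text \<open>Graphs on the node type 'n (n = CARD('n) nodes) given by their adjacency matrix.\<close>

definition simple_graph_adj :: "real^'n^'n \<Rightarrow> bool" where
  "simple_graph_adj A \<longleftrightarrow>
     (\<forall>i j. A$i$j = 0 \<or> A$i$j = 1) \<and> (\<forall>i j. A$i$j = A$j$i) \<and> (\<forall>i. A$i$i = 0)"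

definition connected_adj :: "real^'n^'n \<Rightarrow> bool" where
  "connected_adj A \<longleftrightarrow> (\<forall>i j. (i, j) \<in> {(a, b). A$a$b = 1}\<^sup>*)"

definition degree_matrix :: "real^'n^'n \<Rightarrow> real^'n^'n" where
  "degree_matrix A = (\<chi> i j. if i = j then (\<Sum>k\<in>UNIV. A$i$k) else 0)"

definition laplacian :: "real^'n^'n \<Rightarrow> real^'n^'n" where
  "laplacian A = degree_matrix A - A"

definition G_op :: "real^'n^'n \<Rightarrow> (real^'n) \<times> (real^'n) \<Rightarrow> (real^'n) \<times> (real^'n)" where
  "G_op L y = (mat 0 *v fst y + mat 1 *v snd y, - (mat 1 *v fst y) - L *v snd y)"

definition forcing :: "real \<Rightarrow> real \<Rightarrow> 'n \<Rightarrow> real \<Rightarrow> (real^'n) \<times> (real^'n)" where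
  "forcing F0 \<omega> h t = (0, (F0 * sin (\<omega> * t)) *\<^sub>R axis h 1)"

definition lam_plus :: "real \<Rightarrow> complex \<Rightarrow> complex" where
  "lam_plus \<mu> \<xi> = (\<xi> - complex_of_real \<mu>) / 2"

definition lam_minus :: "real \<Rightarrow> complex \<Rightarrow> complex" where
  "lam_minus \<mu> \<xi> = - (\<xi> + complex_of_real \<mu>) / 2"

text \<open>Coefficient of phi_i in x(t); arguments: F0, omega, mu_i, xi_i, phi_i(h), t.\<close>

definition x_coef :: "real \<Rightarrow> real \<Rightarrow> real \<Rightarrow> complex \<Rightarrow> real \<Rightarrow> real \<Rightarrow> complex" where
  "x_coef F0 \<omega> \<mu> \<xi> ph t =
    (let lp = lam_plus \<mu> \<xi>; lm = lam_minus \<mu> \<xi>; w = complex_of_real \<omega> in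
     complex_of_real F0 * complex_of_real ph / \<xi> *
      ( ((1 - lm\<^sup>2) / (\<xi> * (w\<^sup>2 + lm\<^sup>2)) + (1 - lp\<^sup>2) / (\<xi> * (w\<^sup>2 + lp\<^sup>2))) * complex_of_real (sin (\<omega> * t))
      + (1 / (w\<^sup>2 + lm\<^sup>2) - 1 / (w\<^sup>2 + lp\<^sup>2)) * w * complex_of_real (cos (\<omega> * t))
      + w * exp (lp * complex_of_real t) / (w\<^sup>2 + lp\<^sup>2)
      - w * exp (lm * complex_of_real t) / (w\<^sup>2 + lm\<^sup>2)))"

definition v_coef :: "real \<Rightarrow> real \<Rightarrow> real \<Rightarrow> complex \<Rightarrow> real \<Rightarrow> real \<Rightarrow> complex" where
  "v_coef F0 \<omega> \<mu> \<xi> ph t =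
    (let lp = lam_plus \<mu> \<xi>; lm = lam_minus \<mu> \<xi>; w = complex_of_real \<omega> in
     complex_of_real F0 * complex_of_real ph / \<xi> *
      ( (lm * (1 - lm\<^sup>2) / (\<xi> * (w\<^sup>2 + lm\<^sup>2)) + lp * (1 - lp\<^sup>2) / (\<xi> * (w\<^sup>2 + lp\<^sup>2))) * complex_of_real (sin (\<omega> * t))
      + (lm / (w\<^sup>2 + lm\<^sup>2) - lp / (w\<^sup>2 + lp\<^sup>2)) * w * complex_of_real (cos (\<omega> * t))
      + w * lp * exp (lp * complex_of_real t) / (w\<^sup>2 + lp\<^sup>2)
      - w * lm * exp (lm * complex_of_real t) / (w\<^sup>2 + lm\<^sup>2)))"

end

theory Submission
  imports Defs
begin

text \<open>Projecting onto the eigenvector \<open>\<phi>\<^sub>i\<close>, the coordinates \<open>c = \<phi>\<^sub>i \<bullet> x\<close>, \<open>d = \<phi>\<^sub>i \<bullet> v\<close>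
  obey the forced oscillator \<open>c' = d\<close>, \<open>d' = -c - \<mu>\<^sub>i d + F\<^sub>0 \<phi>\<^sub>i(h) sin \<omega>t\<close>.
  Since \<open>\<lambda>\<^sub>i\<^sup>+ + \<lambda>\<^sub>i\<^sup>- = -\<mu>\<^sub>i\<close> and \<open>\<lambda>\<^sub>i\<^sup>+ \<lambda>\<^sub>i\<^sup>- = 1\<close>, the oscillator factors: \<open>d - \<lambda>\<^sub>i\<^sup>\<mp> c\<close>
  solves the scalar equation \<open>u' = \<lambda>\<^sub>i\<^sup>\<plusminus> u + F\<^sub>0 \<phi>\<^sub>i(h) sin \<omega>t\<close>, \<open>u(0) = 0\<close>, whose unique
  solution is explicit. Subtracting the two and dividing by \<open>\<lambda>\<^sub>i\<^sup>+ - \<lambda>\<^sub>i\<^sup>- = \<xi>\<^sub>i\<close> recovers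
  \<open>c\<close> and \<open>d\<close>; here \<open>\<xi>\<^sub>i \<noteq> 0\<close> because Laplacian eigenvalues are nonnegative and \<open>\<mu>\<^sub>i \<noteq> 2\<close>,
  and \<open>\<omega>\<^sup>2 + (\<lambda>\<^sub>i\<^sup>\<plusminus>)\<^sup>2 \<noteq> 0\<close> because \<open>\<omega> \<noteq> 1\<close>.\<close>

lemma orthonormal_family_expansion:
  fixes \<phi> :: "'i::finite \<Rightarrow> 'a::real_inner"
  assumes orth: "\<forall>i j. \<phi> i \<bullet> \<phi> j = (if i = j then 1 else 0)" and x: "x \<in> span (range \<phi>)"
  shows "x = (\<Sum>i\<in>UNIV. (\<phi> i \<bullet> x) *\<^sub>R \<phi> i)"
proof -
  have "inj \<phi>"
    by (rule injI) (metis orth zero_neq_one)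
  have "pairwise orthogonal (range \<phi>)"
    using orth by (auto simp: pairwise_def orthogonal_def)
  moreover have "norm b = 1" if "b \<in> range \<phi>" for b
    using that orth by (auto simp: norm_eq_1)
  ultimately have "(\<Sum>b\<in>range \<phi>. (x \<bullet> b) *\<^sub>R b) = x"
    using x by (intro orthonormal_basis_expand) auto
  then show ?thesis
    using \<open>inj \<phi>\<close> by (simp add: sum.reindex inner_commute)
qed

lemma laplacian_symmetric:
  assumes "\<forall>i j. A$i$j = A$j$i"
  shows "transpose (laplacian A) = laplacian A"
  using assms unfolding laplacian_def degree_matrix_def transpose_def
  by (simp add: vec_eq_iff)

lemma inner_symmetric_matrix_eigenvector:
  fixes M :: "real^'n^'n"
  assumes "transpose M = M" and "M *v \<phi> = \<mu> *\<^sub>R \<phi>"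
  shows "\<phi> \<bullet> (M *v v) = \<mu> * (\<phi> \<bullet> v)"
proof -
  have "\<phi> \<bullet> (M *v v) = (\<phi> v* M) \<bullet> v"
    by (metis dot_lmul_matrix)
  also have "\<phi> v* M = M *v \<phi>"
    using vector_transpose_matrix[of \<phi> M] assms(1) by simp
  finally show ?thesis
    using assms(2) by simp
qed

lemma laplacian_mult_vec_nth:
  "(laplacian A *v x) $ j = (\<Sum>k\<in>UNIV. A$j$k) * x$j - (\<Sum>k\<in>UNIV. A$j$k * x$k)"
proof -
  have "(laplacian A *v x) $ j = (\<Sum>k\<in>UNIV. ((if j = k then (\<Sum>l\<in>UNIV. A$j$l) else 0) - A$j$k) * x$k)"
    by (simp add: laplacian_def degree_matrix_def matrix_vector_mult_def)
  also have "\<dots> = (\<Sum>k\<in>UNIV. (if j = k then (\<Sum>l\<in>UNIV. A$j$l) * x$k else 0) - A$j$k * x$k)"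
    by (intro sum.cong) (simp_all add: left_diff_distrib)
  finally show ?thesis
    by (simp add: sum_subtractf)
qed

text \<open>At an entry \<open>j\<close> of maximal modulus, \<open>|K\<^sub>j\<^sub>j - m| |x\<^sub>j| = |\<Sum>\<^sub>k A\<^sub>j\<^sub>k x\<^sub>k| \<le> K\<^sub>j\<^sub>j |x\<^sub>j|\<close>,
  which is impossible for \<open>m < 0\<close>.\<close>

lemma laplacian_eigenvalue_nonneg:
  fixes A :: "real^'n^'n"
  assumes A_nonneg: "\<forall>i j. A$i$j \<ge> 0"
    and eig: "laplacian A *v x = m *\<^sub>R x" and "x \<noteq> 0"
  shows "m \<ge> 0"
proof (rule ccontr)
  assume "\<not> m \<ge> 0"
  obtain j where j_max: "\<And>k. \<bar>x $ k\<bar> \<le> \<bar>x $ j\<bar>"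
    using Max_ge[of "range (\<lambda>k. \<bar>x $ k\<bar>)"] Max_in[of "range (\<lambda>k. \<bar>x $ k\<bar>)"] by fastforce
  have "\<bar>x $ j\<bar> > 0"
    using \<open>x \<noteq> 0\<close> j_max by (metis abs_ge_zero abs_le_zero_iff order_le_less vec_eq_iff zero_index)
  define K where "K = (\<Sum>k\<in>UNIV. A$j$k)"
  have "K \<ge> 0"
    unfolding K_def using A_nonneg by (simp add: sum_nonneg)
  have eq: "(K - m) * x$j = (\<Sum>k\<in>UNIV. A$j$k * x$k)"
    using laplacian_mult_vec_nth[of A x j] eig by (simp add: K_def algebra_simps)
  have "(K - m) * \<bar>x$j\<bar> = \<bar>\<Sum>k\<in>UNIV. A$j$k * x$k\<bar>"
    using \<open>K \<ge> 0\<close> \<open>\<not> m \<ge> 0\<close> by (simp add: eq[symmetric] abs_mult)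
  also have "\<dots> \<le> (\<Sum>k\<in>UNIV. \<bar>A$j$k * x$k\<bar>)"
    by (rule sum_abs)
  also have "\<dots> \<le> (\<Sum>k\<in>UNIV. A$j$k * \<bar>x$j\<bar>)"
    using A_nonneg j_max by (intro sum_mono) (simp add: abs_mult mult_left_mono)
  also have "\<dots> = K * \<bar>x$j\<bar>"
    by (simp add: K_def sum_distrib_right)
  finally show False
    using \<open>\<not> m \<ge> 0\<close> \<open>\<bar>x $ j\<bar> > 0\<close> by (simp add: algebra_simps zero_le_mult_iff)
qed

lemma eigenvector_inner_has_real_derivative:
  fixes L :: "real^'n^'n"
  assumes "transpose L = L" and "L *v \<phi> = \<mu> *\<^sub>R \<phi>"
    and y': "(y has_vector_derivative (G_op L (y s) + forcing F0 \<omega> h s)) (at s within S)"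
  shows "((\<lambda>s. \<phi> \<bullet> fst (y s)) has_real_derivative \<phi> \<bullet> snd (y s)) (at s within S)"
    and "((\<lambda>s. \<phi> \<bullet> snd (y s)) has_real_derivative
           - (\<phi> \<bullet> fst (y s)) - \<mu> * (\<phi> \<bullet> snd (y s)) + F0 * \<phi> $ h * sin (\<omega> * s)) (at s within S)"
proof -
  have "((\<lambda>s. \<phi> \<bullet> fst (y s)) has_vector_derivative \<phi> \<bullet> fst (G_op L (y s) + forcing F0 \<omega> h s)) (at s within S)"
    by (intro bounded_linear.has_vector_derivative[OF bounded_linear_inner_right]
        bounded_linear.has_vector_derivative[OF bounded_linear_fst] y')
  then show "((\<lambda>s. \<phi> \<bullet> fst (y s)) has_real_derivative \<phi> \<bullet> snd (y s)) (at s within S)"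
    by (simp add: has_real_derivative_iff_has_vector_derivative G_op_def forcing_def)
  have "((\<lambda>s. \<phi> \<bullet> snd (y s)) has_vector_derivative \<phi> \<bullet> snd (G_op L (y s) + forcing F0 \<omega> h s)) (at s within S)"
    by (intro bounded_linear.has_vector_derivative[OF bounded_linear_inner_right]
        bounded_linear.has_vector_derivative[OF bounded_linear_snd] y')
  moreover have "\<phi> \<bullet> snd (G_op L (y s) + forcing F0 \<omega> h s)
      = - (\<phi> \<bullet> fst (y s)) - \<mu> * (\<phi> \<bullet> snd (y s)) + F0 * \<phi> $ h * sin (\<omega> * s)"
    using inner_symmetric_matrix_eigenvector[OF assms(1,2)]
    by (simp add: G_op_def forcing_def inner_diff_right inner_add_right inner_axis mult_ac)
  ultimately show "((\<lambda>s. \<phi> \<bullet> snd (y s)) has_real_derivative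
      - (\<phi> \<bullet> fst (y s)) - \<mu> * (\<phi> \<bullet> snd (y s)) + F0 * \<phi> $ h * sin (\<omega> * s)) (at s within S)"
    by (simp add: has_real_derivative_iff_has_vector_derivative)
qed

lemma linear_ode_zero_initial:
  fixes R :: "real \<Rightarrow> complex"
  assumes "R 0 = 0"
    and R': "\<And>s. s \<ge> 0 \<Longrightarrow> (R has_vector_derivative l * R s) (at s within {0..})"
    and "t \<ge> 0"
  shows "R t = 0"
proof -
  define S where "S = (\<lambda>s. exp (- l * of_real s) * R s)"
  have "(S has_vector_derivative 0) (at s within {0..})" if "s \<in> {0..}" for s
  proof -
    have "((\<lambda>s. exp (- l * of_real s)) has_vector_derivative - l * exp (- l * of_real s)) (at s within {0..})"
      by (rule has_vector_derivative_real_field[where f = "\<lambda>z. exp (- l * z)"])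
         (auto intro!: derivative_eq_intros)
    from has_vector_derivative_mult[OF this R'] that
    have "(S has_vector_derivative exp (- l * of_real s) * (l * R s) + - l * exp (- l * of_real s) * R s)
        (at s within {0..})"
      unfolding S_def by simp
    then show ?thesis
      by (simp add: algebra_simps)
  qed
  then obtain c where "\<And>s. s \<in> {0..} \<Longrightarrow> S s = c"
    using has_vector_derivative_zero_constant[of "{0::real..}" S] by auto
  then have "S t = S 0"
    using \<open>t \<ge> 0\<close> by simp
  then show ?thesis
    using \<open>R 0 = 0\<close> by (simp add: S_def)
qed

definition sine_response :: "real \<Rightarrow> complex \<Rightarrow> real \<Rightarrow> complex" where
  "sine_response \<omega> l t = (- l * of_real (sin (\<omega> * t)) - of_real \<omega> * of_real (cos (\<omega> * t))
       + of_real \<omega> * exp (l * of_real t)) / ((of_real \<omega>)\<^sup>2 + l\<^sup>2)"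

lemma sine_response_0 [simp]: "sine_response \<omega> l 0 = 0"
  by (simp add: sine_response_def)

lemma sine_response_has_vector_derivative:
  assumes "(of_real \<omega>)\<^sup>2 + l\<^sup>2 \<noteq> 0"
  shows "(sine_response \<omega> l has_vector_derivative l * sine_response \<omega> l t + of_real (sin (\<omega> * t)))
           (at t within S)"
proof -
  have e: "((\<lambda>s. exp (l * of_real s)) has_vector_derivative l * exp (l * of_real t)) (at t within S)"
    by (rule has_vector_derivative_real_field[where f = "\<lambda>z. exp (l * z)"])
       (auto intro!: derivative_eq_intros)
  have s: "((\<lambda>s. complex_of_real (sin (\<omega> * s))) has_vector_derivative of_real (cos (\<omega> * t) * \<omega>)) (at t within S)"
    by (rule has_vector_derivative_of_real) (auto intro!: derivative_eq_intros)
  have c: "((\<lambda>s. complex_of_real (cos (\<omega> * s))) has_vector_derivative of_real (- sin (\<omega> * t) * \<omega>)) (at t within S)"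
    by (rule has_vector_derivative_of_real) (auto intro!: derivative_eq_intros)
  have "(sine_response \<omega> l has_vector_derivative
     (- l * of_real (cos (\<omega> * t) * \<omega>) - of_real \<omega> * of_real (- sin (\<omega> * t) * \<omega>)
       + of_real \<omega> * (l * exp (l * of_real t))) / ((of_real \<omega>)\<^sup>2 + l\<^sup>2)) (at t within S)"
    unfolding sine_response_def
    by (intro has_vector_derivative_divide has_vector_derivative_add has_vector_derivative_diff
        has_vector_derivative_mult_right s c e)
  then show ?thesis
    by (rule has_vector_derivative_eq_rhs)
       (use assms in \<open>simp add: sine_response_def field_simps power2_eq_square\<close>)
qed

lemma lam_plus_add_lam_minus: "lam_plus \<mu> \<xi> + lam_minus \<mu> \<xi> = - of_real \<mu>"
  by (simp add: lam_plus_def lam_minus_def field_simps)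

lemma lam_plus_diff_lam_minus: "lam_plus \<mu> \<xi> - lam_minus \<mu> \<xi> = \<xi>"
  by (simp add: lam_plus_def lam_minus_def field_simps)

lemma lam_plus_mult_lam_minus:
  assumes "\<xi>\<^sup>2 = complex_of_real (\<mu>\<^sup>2 - 4)"
  shows "lam_plus \<mu> \<xi> * lam_minus \<mu> \<xi> = 1"
proof -
  have "lam_plus \<mu> \<xi> * lam_minus \<mu> \<xi> = - (\<xi>\<^sup>2 - (of_real \<mu>)\<^sup>2) / 4"
    by (simp add: lam_plus_def lam_minus_def field_simps power2_eq_square)
  then show ?thesis
    using assms by simp
qed

text \<open>\<open>\<omega>\<^sup>2 + l\<^sup>2 = 0\<close> and \<open>l\<^sup>2 + \<mu> l + 1 = 0\<close> force \<open>\<mu> l = \<omega>\<^sup>2 - 1 \<noteq> 0\<close>, so \<open>l\<close> is real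
  and \<open>\<omega>\<^sup>2 + l\<^sup>2 > 0\<close>.\<close>

lemma omega_sq_add_root_sq_nonzero:
  fixes l1 l2 :: complex
  assumes sum: "l1 + l2 = - of_real \<mu>" and prod: "l1 * l2 = 1" and "\<omega> > 0" "\<omega> \<noteq> 1"
  shows "(of_real \<omega>)\<^sup>2 + l1\<^sup>2 \<noteq> 0"
proof
  assume D: "(of_real \<omega>)\<^sup>2 + l1\<^sup>2 = 0"
  have \<mu>: "of_real \<mu> = - (l1 + l2)"
    using sum by simp
  have quadratic: "l1\<^sup>2 + of_real \<mu> * l1 + 1 = 0"
    unfolding \<mu> prod[symmetric] by (simp add: power2_eq_square algebra_simps)
  have "of_real \<mu> * l1 = (l1\<^sup>2 + of_real \<mu> * l1 + 1) - ((of_real \<omega>)\<^sup>2 + l1\<^sup>2) + (of_real \<omega>)\<^sup>2 - 1"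
    by (simp add: algebra_simps)
  also have "\<dots> = (of_real \<omega>)\<^sup>2 - 1"
    using quadratic D by simp
  finally have \<mu>l1: "of_real \<mu> * l1 = of_real (\<omega>\<^sup>2 - 1)"
    by simp
  have "\<omega>\<^sup>2 - 1 \<noteq> 0"
    using \<open>\<omega> > 0\<close> \<open>\<omega> \<noteq> 1\<close> by (simp add: power2_eq_1_iff)
  then have "\<mu> \<noteq> 0"
    using \<mu>l1 by (metis mult_zero_left of_real_0 of_real_eq_0_iff)
  then have "l1 = of_real ((\<omega>\<^sup>2 - 1) / \<mu>)"
    using \<mu>l1 by (simp add: field_simps)
  then have "\<omega>\<^sup>2 + ((\<omega>\<^sup>2 - 1) / \<mu>)\<^sup>2 = 0"
    using D by (metis of_real_add of_real_eq_0_iff of_real_power)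
  moreover have "\<omega>\<^sup>2 > 0"
    using \<open>\<omega> > 0\<close> by simp
  ultimately show False
    by (metis add_pos_nonneg less_irrefl zero_le_power2)
qed

lemma forced_oscillator_factor:
  fixes c d :: "real \<Rightarrow> real" and l1 l2 :: complex
  assumes "c 0 = 0" "d 0 = 0"
    and c': "\<And>s. s \<ge> 0 \<Longrightarrow> (c has_real_derivative d s) (at s within {0..})"
    and d': "\<And>s. s \<ge> 0 \<Longrightarrow> (d has_real_derivative - c s - \<mu> * d s + f * sin (\<omega> * s)) (at s within {0..})"
    and sum: "l1 + l2 = - of_real \<mu>" and prod: "l1 * l2 = 1"
    and D: "(of_real \<omega>)\<^sup>2 + l1\<^sup>2 \<noteq> 0" and "t \<ge> 0"
  shows "of_real (d t) - l2 * of_real (c t) = of_real f * sine_response \<omega> l1 t"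
proof -
  define R where "R s = of_real (d s) - l2 * of_real (c s) - of_real f * sine_response \<omega> l1 s" for s
  have "R t = 0"
  proof (rule linear_ode_zero_initial[where l = l1])
    show "R 0 = 0"
      using \<open>c 0 = 0\<close> \<open>d 0 = 0\<close> by (simp add: R_def)
    show "t \<ge> 0" by fact
    fix s :: real assume "s \<ge> 0"
    have "(R has_vector_derivative
        of_real (- c s - \<mu> * d s + f * sin (\<omega> * s)) - l2 * of_real (d s)
         - of_real f * (l1 * sine_response \<omega> l1 s + of_real (sin (\<omega> * s)))) (at s within {0..})"
      unfolding R_def
      by (intro has_vector_derivative_diff has_vector_derivative_mult_right
          sine_response_has_vector_derivative D has_vector_derivative_of_real c' d' \<open>s \<ge> 0\<close>)
    moreover have "of_real (- c s - \<mu> * d s + f * sin (\<omega> * s)) - l2 * of_real (d s)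
         - of_real f * (l1 * sine_response \<omega> l1 s + of_real (sin (\<omega> * s))) = l1 * R s"
    proof -
      have \<mu>: "of_real \<mu> = - (l1 + l2)"
        using sum by simp
      have "l1 * R s = l1 * of_real (d s) - (l1 * l2) * of_real (c s) - of_real f * (l1 * sine_response \<omega> l1 s)"
        by (simp add: R_def algebra_simps)
      also have "\<dots> = l1 * of_real (d s) - of_real (c s) - of_real f * (l1 * sine_response \<omega> l1 s)"
        by (simp add: prod)
      finally show ?thesis
        by (simp add: \<mu> algebra_simps)
    qed
    ultimately show "(R has_vector_derivative l1 * R s) (at s within {0..})"
      by simp
  qed
  then show ?thesis
    by (simp add: R_def)
qed

lemma forced_oscillator_solution:
  fixes c d :: "real \<Rightarrow> real"
  assumes "c 0 = 0" "d 0 = 0"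
    and c': "\<And>s. s \<ge> 0 \<Longrightarrow> (c has_real_derivative d s) (at s within {0..})"
    and d': "\<And>s. s \<ge> 0 \<Longrightarrow> (d has_real_derivative - c s - \<mu> * d s + f * sin (\<omega> * s)) (at s within {0..})"
    and \<xi>: "\<xi>\<^sup>2 = complex_of_real (\<mu>\<^sup>2 - 4)" and "\<omega> > 0" "\<omega> \<noteq> 1" and "t \<ge> 0"
  shows "\<xi> * of_real (c t) = of_real f *
           (sine_response \<omega> (lam_plus \<mu> \<xi>) t - sine_response \<omega> (lam_minus \<mu> \<xi>) t)"
    and "\<xi> * of_real (d t) = of_real f *
           (lam_plus \<mu> \<xi> * sine_response \<omega> (lam_plus \<mu> \<xi>) t
            - lam_minus \<mu> \<xi> * sine_response \<omega> (lam_minus \<mu> \<xi>) t)"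
proof -
  define lp where "lp = lam_plus \<mu> \<xi>"
  define lm where "lm = lam_minus \<mu> \<xi>"
  have sum: "lp + lm = - of_real \<mu>" "lm + lp = - of_real \<mu>"
    unfolding lp_def lm_def using lam_plus_add_lam_minus by (simp_all add: add.commute)
  have prod: "lp * lm = 1" "lm * lp = 1"
    unfolding lp_def lm_def using lam_plus_mult_lam_minus[OF \<xi>] by (simp_all add: mult.commute)
  have diff: "lp - lm = \<xi>"
    unfolding lp_def lm_def by (rule lam_plus_diff_lam_minus)
  note factor = forced_oscillator_factor[OF assms(1,2) c' d' _ _ omega_sq_add_root_sq_nonzero \<open>t \<ge> 0\<close>]
  have plus: "of_real (d t) - lm * of_real (c t) = of_real f * sine_response \<omega> lp t"
    by (rule factor) (use sum prod \<open>\<omega> > 0\<close> \<open>\<omega> \<noteq> 1\<close> in auto)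
  have minus: "of_real (d t) - lp * of_real (c t) = of_real f * sine_response \<omega> lm t"
    by (rule factor) (use sum prod \<open>\<omega> > 0\<close> \<open>\<omega> \<noteq> 1\<close> in auto)
  have "\<xi> * of_real (c t) = (of_real (d t) - lm * of_real (c t)) - (of_real (d t) - lp * of_real (c t))"
    unfolding diff[symmetric] by (simp add: algebra_simps)
  also have "\<dots> = of_real f * (sine_response \<omega> lp t - sine_response \<omega> lm t)"
    unfolding plus minus by (simp add: algebra_simps)
  finally show "\<xi> * of_real (c t) = of_real f * (sine_response \<omega> (lam_plus \<mu> \<xi>) t - sine_response \<omega> (lam_minus \<mu> \<xi>) t)"
    by (simp add: lp_def lm_def)
  have "\<xi> * of_real (d t) = lp * (of_real (d t) - lm * of_real (c t)) - lm * (of_real (d t) - lp * of_real (c t))"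
    unfolding diff[symmetric] by (simp add: algebra_simps)
  also have "\<dots> = of_real f * (lp * sine_response \<omega> lp t - lm * sine_response \<omega> lm t)"
    unfolding plus minus by (simp add: algebra_simps)
  finally show "\<xi> * of_real (d t) = of_real f *
      (lam_plus \<mu> \<xi> * sine_response \<omega> (lam_plus \<mu> \<xi>) t - lam_minus \<mu> \<xi> * sine_response \<omega> (lam_minus \<mu> \<xi>) t)"
    by (simp add: lp_def lm_def)
qed

lemma x_coef_eq_sine_response:
  assumes \<xi>: "\<xi>\<^sup>2 = complex_of_real (\<mu>\<^sup>2 - 4)" and "\<xi> \<noteq> 0"
  shows "x_coef F0 \<omega> \<mu> \<xi> ph t = of_real (F0 * ph) / \<xi> *
           (sine_response \<omega> (lam_plus \<mu> \<xi>) t - sine_response \<omega> (lam_minus \<mu> \<xi>) t)"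
    and "v_coef F0 \<omega> \<mu> \<xi> ph t = of_real (F0 * ph) / \<xi> *
           (lam_plus \<mu> \<xi> * sine_response \<omega> (lam_plus \<mu> \<xi>) t
            - lam_minus \<mu> \<xi> * sine_response \<omega> (lam_minus \<mu> \<xi>) t)"
proof -
  define lp where "lp = lam_plus \<mu> \<xi>"
  define lm where "lm = lam_minus \<mu> \<xi>"
  have prod: "lp * lm = 1"
    unfolding lp_def lm_def by (rule lam_plus_mult_lam_minus[OF \<xi>])
  have diff: "lp - lm = \<xi>"
    unfolding lp_def lm_def by (rule lam_plus_diff_lam_minus)
  have "1 - lm\<^sup>2 = \<xi> * lm" "1 - lp\<^sup>2 = - (\<xi> * lp)"
    by (simp_all add: prod[symmetric] diff[symmetric] power2_eq_square algebra_simps)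
  then have minus: "(1 - lm\<^sup>2) / (\<xi> * D) = lm / D"
    and plus: "(1 - lp\<^sup>2) / (\<xi> * D) = - lp / D" for D
    using \<open>\<xi> \<noteq> 0\<close> by simp_all
  show "x_coef F0 \<omega> \<mu> \<xi> ph t = of_real (F0 * ph) / \<xi> *
           (sine_response \<omega> (lam_plus \<mu> \<xi>) t - sine_response \<omega> (lam_minus \<mu> \<xi>) t)"
    unfolding x_coef_def Let_def lp_def[symmetric] lm_def[symmetric] minus plus
    by (simp add: sine_response_def divide_inverse algebra_simps)
  show "v_coef F0 \<omega> \<mu> \<xi> ph t = of_real (F0 * ph) / \<xi> *
           (lam_plus \<mu> \<xi> * sine_response \<omega> (lam_plus \<mu> \<xi>) t
            - lam_minus \<mu> \<xi> * sine_response \<omega> (lam_minus \<mu> \<xi>) t)"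
    unfolding v_coef_def Let_def lp_def[symmetric] lm_def[symmetric] times_divide_eq_right[symmetric] minus plus
    by (simp add: sine_response_def divide_inverse algebra_simps)
qed

lemma forced_oscillator_eq_coefs:
  fixes c d :: "real \<Rightarrow> real"
  assumes "c 0 = 0" "d 0 = 0"
    and "\<And>s. s \<ge> 0 \<Longrightarrow> (c has_real_derivative d s) (at s within {0..})"
    and "\<And>s. s \<ge> 0 \<Longrightarrow>
           (d has_real_derivative - c s - \<mu> * d s + F0 * ph * sin (\<omega> * s)) (at s within {0..})"
    and \<xi>: "\<xi>\<^sup>2 = complex_of_real (\<mu>\<^sup>2 - 4)" and "\<xi> \<noteq> 0"
    and "\<omega> > 0" "\<omega> \<noteq> 1" "t \<ge> 0"
  shows "of_real (c t) = x_coef F0 \<omega> \<mu> \<xi> ph t \<and> of_real (d t) = v_coef F0 \<omega> \<mu> \<xi> ph t"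
proof -
  note solution = forced_oscillator_solution[OF assms(1-4) \<xi> assms(7-9)]
  note coefs = x_coef_eq_sine_response[OF \<xi> \<open>\<xi> \<noteq> 0\<close>]
  have "of_real (c t) = \<xi> * of_real (c t) / \<xi>"
    using \<open>\<xi> \<noteq> 0\<close> by simp
  also have "\<dots> = x_coef F0 \<omega> \<mu> \<xi> ph t"
    by (simp add: solution(1) coefs(1))
  finally have "of_real (c t) = x_coef F0 \<omega> \<mu> \<xi> ph t" .
  have "of_real (d t) = \<xi> * of_real (d t) / \<xi>"
    using \<open>\<xi> \<noteq> 0\<close> by simp
  also have "\<dots> = v_coef F0 \<omega> \<mu> \<xi> ph t"
    by (simp add: solution(2) coefs(2))
  finally show ?thesis
    using \<open>of_real (c t) = x_coef F0 \<omega> \<mu> \<xi> ph t\<close> by simp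
qed

lemma sqrt_discriminant_nonzero:
  assumes "\<mu> \<ge> 0" "\<mu> \<noteq> 2" and "\<xi>\<^sup>2 = complex_of_real (\<mu>\<^sup>2 - 4)"
  shows "\<xi> \<noteq> 0"
proof
  assume "\<xi> = 0"
  then have "complex_of_real (\<mu>\<^sup>2 - 4) = 0"
    using assms(3) by simp
  then have "(\<mu> - 2) * (\<mu> + 2) = 0"
    by (simp only: of_real_eq_0_iff) (simp add: algebra_simps power2_eq_square)
  then show False
    using assms(1,2) by simp
qed

theorem proposition4:
  fixes A :: "real^'n^'n" and \<phi> :: "'n \<Rightarrow> real^'n" and \<mu> :: "'n \<Rightarrow> real"
    and \<xi> :: "'n \<Rightarrow> complex" and h :: 'n and F0 \<omega> :: real
    and y :: "real \<Rightarrow> (real^'n) \<times> (real^'n)"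
  assumes "simple_graph_adj A" and "connected_adj A"
    and "\<forall>i j. \<phi> i \<bullet> \<phi> j = (if i = j then 1 else 0)"
    and "span (range \<phi>) = UNIV"
    and "\<forall>i. laplacian A *v \<phi> i = \<mu> i *\<^sub>R \<phi> i"
    and "\<forall>i. \<mu> i \<noteq> 2"
    and "\<forall>i. (\<xi> i)\<^sup>2 = complex_of_real ((\<mu> i)\<^sup>2 - 4)"
    and "\<omega> > 0" and "\<omega> \<noteq> 1"
    and "y 0 = 0"
    and "\<forall>t\<ge>0. (y has_vector_derivative (G_op (laplacian A) (y t) + forcing F0 \<omega> h t)) (at t within {0..})"
  shows "\<forall>t\<ge>0. \<forall>k.
           complex_of_real (fst (y t) $ k) = (\<Sum>i\<in>UNIV. x_coef F0 \<omega> (\<mu> i) (\<xi> i) (\<phi> i $ h) t * complex_of_real (\<phi> i $ k))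
         \<and> complex_of_real (snd (y t) $ k) = (\<Sum>i\<in>UNIV. v_coef F0 \<omega> (\<mu> i) (\<xi> i) (\<phi> i $ h) t * complex_of_real (\<phi> i $ k))"
proof -
  have A_symmetric: "\<forall>i j. A$i$j = A$j$i" and A_01: "\<And>i j. A$i$j = 0 \<or> A$i$j = 1"
    using assms(1) unfolding simple_graph_adj_def by blast+
  have A_nonneg: "\<forall>i j. A$i$j \<ge> 0"
    using A_01 by (metis order_refl zero_le_one)
  have modes: "of_real (\<phi> i \<bullet> fst (y t)) = x_coef F0 \<omega> (\<mu> i) (\<xi> i) (\<phi> i $ h) t
      \<and> of_real (\<phi> i \<bullet> snd (y t)) = v_coef F0 \<omega> (\<mu> i) (\<xi> i) (\<phi> i $ h) t" if "t \<ge> 0" for t i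
  proof (rule forced_oscillator_eq_coefs)
    have "\<phi> i \<noteq> 0"
      using assms(3) by (metis inner_zero_left zero_neq_one)
    then have "\<mu> i \<ge> 0"
      by (rule laplacian_eigenvalue_nonneg[OF A_nonneg assms(5)[rule_format]])
    then show "\<xi> i \<noteq> 0"
      by (rule sqrt_discriminant_nonzero[OF _ assms(6)[rule_format] assms(7)[rule_format]])
    note derivs = eigenvector_inner_has_real_derivative[OF laplacian_symmetric[OF A_symmetric]
        assms(5)[rule_format] assms(11)[rule_format]]
    show "((\<lambda>s. \<phi> i \<bullet> fst (y s)) has_real_derivative \<phi> i \<bullet> snd (y s)) (at s within {0..})"
      and "((\<lambda>s. \<phi> i \<bullet> snd (y s)) has_real_derivative - (\<phi> i \<bullet> fst (y s)) - \<mu> i * (\<phi> i \<bullet> snd (y s))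
            + F0 * \<phi> i $ h * sin (\<omega> * s)) (at s within {0..})" if "s \<ge> 0" for s
      using derivs[OF that] by simp_all
  qed (use assms(7-10) that in simp_all)
  have expansion: "z $ k = (\<Sum>i\<in>UNIV. (\<phi> i \<bullet> z) * \<phi> i $ k)" for z k
    using arg_cong[where f = "\<lambda>z. z $ k", OF orthonormal_family_expansion[OF assms(3), of z]] assms(4)
    by (simp add: sum_component)
  show ?thesis
    using modes by (simp add: expansion[of "fst (y t)" for t] expansion[of "snd (y t)" for t])
qed

end
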